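(* Let $(\mathcal E,B,\mathcal L_{\mathcal P})$ be an epistemic space, $\mathcal S$ a set of agents, and $\Phi\mapsto\succeq_\Phi$ an assignment satisfying Properties 3 and 4. Then the assignment satisfies Property 2 if and only if it satisfies the Maximality Condition.
   Context: An epistemic space: $\mathcal E$ nonempty, $B:\mathcal E\to\mathcal L_{\mathcal P}$ whose image modulo equivalence is exactly the consistent propositional formulas over a finite variable set $\mathcal P$; $\mathcal W_{\mathcal P}$ valuations, $[\![\phi]\!]$ models. Agents: well-ordered set $\mathcal S$; society: nonempty finite $N\subseteq\mathcal S$; $N$-profile: $\Phi:N\to\mathcal E$ with $E_i=\Phi(i)$, identified with $E_i$ when $N=\{i\}$; $\Phi\upharpoonright_M$ restriction; partition $\{N_1,N_2\}$ of $N$: nonempty disjoint sets with union $N$. An assignment maps each profile $\Phi$ to a total preorder $\succeq_\Phi$ on $\mathcal W_{\mathcal P}$ ($\succ$ strict part; $\max(\succeq)$ the set of maximal elements). Properties, for all societies $N$, partitions $\{N_1,N_2\}$, $N$-profiles $\Phi$, interpretations $w,w'$: (2) if $\bigwedge_{i\in N}B(E_i)\nvdash\bot$ then $[\![\bigwedge_{i\in N}B(E_i)]\!]=\max(\succeq_\Phi)$; (3) if $w\succeq_{\Phi\upharpoonright_{N_1}}w'$ and $w\succeq_{\Phi\upharpoonright_{N_2}}w'$ then $w\succeq_\Phi w'$; (4) if $w\succeq_{\Phi\upharpoonright_{N_1}}w'$ and $w\succ_{\Phi\upharpoonright_{N_2}}w'$ then $w\succ_\Phi w'$. Maximality Condition: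 for every agent $i$ and every $i$-profile $E_i$, $[\![B(E_i)]\!]=\max(\succeq_{E_i})$. *)

theory Defs
  imports Main
begin

datatype 'v form =
    Var 'v
  | Bot
  | Neg "'v form"
  | Conj "'v form" "'v form"
  | Disj "'v form" "'v form"
  | Imp "'v form" "'v form"

fun sat :: "('v \<Rightarrow> bool) \<Rightarrow> 'v form \<Rightarrow> bool" where
  "sat w (Var p) = w p"
| "sat w Bot = False"
| "sat w (Neg f) = (\<not> sat w f)"
| "sat w (Conj f g) = (sat w f \<and> sat w g)"
| "sat w (Disj f g) = (sat w f \<or> sat w g)"
| "sat w (Imp f g) = (sat w f \<longrightarrow> sat w g)"

definition models :: "'v form \<Rightarrow> ('v \<Rightarrow> bool) set" where
  "models f = {w. sat w f}"

text \<open>Consistency (phi does not entail bottom); by soundness and completeness of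
  classical propositional logic this is satisfiability.\<close>
definition consistent :: "'v form \<Rightarrow> bool" where
  "consistent f \<longleftrightarrow> models f \<noteq> {}"

text \<open>The set of epistemic states is the (nonempty) type 'e. The image of B modulo
  logical equivalence is exactly the set of consistent formulas.\<close>
definition epistemic_space :: "('e \<Rightarrow> ('v::finite) form) \<Rightarrow> bool" where
  "epistemic_space B \<longleftrightarrow>
     (\<forall>e. consistent (B e)) \<and>
     (\<forall>f. consistent f \<longrightarrow> (\<exists>e. models (B e) = models f))"

text \<open>An N-profile is a partial map
  from agents to epistemic states whose domain N (the society) is finite and nonempty.
  Restriction of a profile to M is map restriction.\<close>
definition is_profile :: "('a \<rightharpoonup> 'e) \<Rightarrow> bool" where
  "is_profile \<Phi> \<longleftrightarrow> finite (dom \<Phi>) \<and> dom \<Phi> \<noteq> {}"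

definition total_preorder :: "('w \<Rightarrow> 'w \<Rightarrow> bool) \<Rightarrow> bool" where
  "total_preorder r \<longleftrightarrow> (\<forall>x y. r x y \<or> r y x) \<and> (\<forall>x y z. r x y \<longrightarrow> r y z \<longrightarrow> r x z)"

definition strict :: "('w \<Rightarrow> 'w \<Rightarrow> bool) \<Rightarrow> 'w \<Rightarrow> 'w \<Rightarrow> bool" where
  "strict r x y \<longleftrightarrow> r x y \<and> \<not> r y x"

definition maxset :: "('w \<Rightarrow> 'w \<Rightarrow> bool) \<Rightarrow> 'w set" where
  "maxset r = {w. \<forall>w'. r w w'}"

definition assignment ::
  "((('a::wellorder) \<rightharpoonup> 'e) \<Rightarrow> ('v \<Rightarrow> bool) \<Rightarrow> ('v \<Rightarrow> bool) \<Rightarrow> bool) \<Rightarrow> bool" where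
  "assignment pref \<longleftrightarrow> (\<forall>\<Phi>. is_profile \<Phi> \<longrightarrow> total_preorder (pref \<Phi>))"

definition conj_models :: "('e \<Rightarrow> 'v form) \<Rightarrow> ('a \<rightharpoonup> 'e) \<Rightarrow> ('v \<Rightarrow> bool) set" where
  "conj_models B \<Phi> = (\<Inter>i\<in>dom \<Phi>. models (B (the (\<Phi> i))))"

definition is_partition :: "'a set \<Rightarrow> 'a set \<Rightarrow> 'a set \<Rightarrow> bool" where
  "is_partition N N1 N2 \<longleftrightarrow> N1 \<noteq> {} \<and> N2 \<noteq> {} \<and> N1 \<inter> N2 = {} \<and> N1 \<union> N2 = N"

definition property2 ::
  "('e \<Rightarrow> 'v form) \<Rightarrow> ((('a::wellorder) \<rightharpoonup> 'e) \<Rightarrow> ('v \<Rightarrow> bool) \<Rightarrow> ('v \<Rightarrow> bool) \<Rightarrow> bool) \<Rightarrow> bool" where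
  "property2 B pref \<longleftrightarrow>
     (\<forall>\<Phi>. is_profile \<Phi> \<longrightarrow> conj_models B \<Phi> \<noteq> {} \<longrightarrow> conj_models B \<Phi> = maxset (pref \<Phi>))"

definition property3 ::
  "((('a::wellorder) \<rightharpoonup> 'e) \<Rightarrow> ('v \<Rightarrow> bool) \<Rightarrow> ('v \<Rightarrow> bool) \<Rightarrow> bool) \<Rightarrow> bool" where
  "property3 pref \<longleftrightarrow>
     (\<forall>\<Phi> N1 N2 w w'. is_profile \<Phi> \<longrightarrow> is_partition (dom \<Phi>) N1 N2 \<longrightarrow>
        pref (\<Phi> |` N1) w w' \<longrightarrow> pref (\<Phi> |` N2) w w' \<longrightarrow> pref \<Phi> w w')"

definition property4 ::
  "((('a::wellorder) \<rightharpoonup> 'e) \<Rightarrow> ('v \<Rightarrow> bool) \<Rightarrow> ('v \<Rightarrow> bool) \<Rightarrow> bool) \<Rightarrow> bool" where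
  "property4 pref \<longleftrightarrow>
     (\<forall>\<Phi> N1 N2 w w'. is_profile \<Phi> \<longrightarrow> is_partition (dom \<Phi>) N1 N2 \<longrightarrow>
        pref (\<Phi> |` N1) w w' \<longrightarrow> strict (pref (\<Phi> |` N2)) w w' \<longrightarrow> strict (pref \<Phi>) w w')"

text \<open>Maximality Condition; the single-agent profile E_i is the map [i |-> E_i].\<close>
definition maximality_condition ::
  "('e \<Rightarrow> 'v form) \<Rightarrow> ((('a::wellorder) \<rightharpoonup> 'e) \<Rightarrow> ('v \<Rightarrow> bool) \<Rightarrow> ('v \<Rightarrow> bool) \<Rightarrow> bool) \<Rightarrow> bool" where
  "maximality_condition B pref \<longleftrightarrow>
     (\<forall>i e. models (B e) = maxset (pref [i \<mapsto> e]))"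

end

theory Submission
  imports Defs
begin

text \<open>Maximality implies Property 2 by induction on the society: split off one agent
  \<open>i\<close>; if the beliefs of \<open>i\<close> and of the rest are jointly consistent, the common maximal
  valuations of the two restricted preorders are maximal for the whole profile by
  Property 3, and every other valuation is strictly beaten by one of them by Property 4.
  The converse is Property 2 for single-agent profiles, whose beliefs are consistent.\<close>

lemma maxset_strict:
  assumes "total_preorder r" and "v \<in> maxset r" and "w \<notin> maxset r"
  shows "strict r v w"
  using assms unfolding total_preorder_def maxset_def strict_def by blast

lemma maxset_eq_Int_maxset:
  assumes "total_preorder r1" and "total_preorder r2"
    and weak: "\<And>w w'. r1 w w' \<Longrightarrow> r2 w w' \<Longrightarrow> r w w'"
    and strict1: "\<And>w w'. strict r1 w w' \<Longrightarrow> r2 w w' \<Longrightarrow> strict r w w'"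
    and strict2: "\<And>w w'. r1 w w' \<Longrightarrow> strict r2 w w' \<Longrightarrow> strict r w w'"
    and "maxset r1 \<inter> maxset r2 \<noteq> {}"
  shows "maxset r = maxset r1 \<inter> maxset r2"
proof
  show "maxset r1 \<inter> maxset r2 \<subseteq> maxset r"
    using weak unfolding maxset_def by blast
next
  obtain v where v1: "v \<in> maxset r1" and v2: "v \<in> maxset r2"
    using \<open>maxset r1 \<inter> maxset r2 \<noteq> {}\<close> by blast
  show "maxset r \<subseteq> maxset r1 \<inter> maxset r2"
  proof
    fix w assume w: "w \<in> maxset r"
    have "\<not> strict r v w"
      using w unfolding maxset_def strict_def by blast
    moreover have "strict r v w" if "w \<notin> maxset r1 \<inter> maxset r2"
    proof (cases "w \<in> maxset r1")
      case True
      with that have "strict r2 v w"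
        by (blast intro: maxset_strict \<open>total_preorder r2\<close> v2)
      with v1 show ?thesis by (auto simp: maxset_def intro: strict2)
    next
      case False
      then have "strict r1 v w"
        by (blast intro: maxset_strict \<open>total_preorder r1\<close> v1)
      with v2 show ?thesis by (auto simp: maxset_def intro: strict1)
    qed
    ultimately show "w \<in> maxset r1 \<inter> maxset r2" by blast
  qed
qed

lemma is_profile_restrict:
  assumes "is_profile \<Phi>" and "N \<subseteq> dom \<Phi>" and "N \<noteq> {}"
  shows "is_profile (\<Phi> |` N)"
  using assms unfolding is_profile_def by (auto intro: finite_subset)

lemma maxset_partition:
  assumes "assignment pref" "property3 pref" "property4 pref"
    and "is_profile \<Phi>" and part: "is_partition (dom \<Phi>) N1 N2"
    and "maxset (pref (\<Phi> |` N1)) \<inter> maxset (pref (\<Phi> |` N2)) \<noteq> {}"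
  shows "maxset (pref \<Phi>) = maxset (pref (\<Phi> |` N1)) \<inter> maxset (pref (\<Phi> |` N2))"
proof (rule maxset_eq_Int_maxset)
  have "N1 \<subseteq> dom \<Phi>" "N1 \<noteq> {}" "N2 \<subseteq> dom \<Phi>" "N2 \<noteq> {}"
    using part unfolding is_partition_def by auto
  then show "total_preorder (pref (\<Phi> |` N1))" "total_preorder (pref (\<Phi> |` N2))"
    using \<open>assignment pref\<close> \<open>is_profile \<Phi>\<close> is_profile_restrict
    unfolding assignment_def by blast+
  have part': "is_partition (dom \<Phi>) N2 N1"
    using part unfolding is_partition_def by blast
  show "pref \<Phi> w w'" if "pref (\<Phi> |` N1) w w'" "pref (\<Phi> |` N2) w w'" for w w'
    using \<open>property3 pref\<close> \<open>is_profile \<Phi>\<close> part that unfolding property3_def by blast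
  show "strict (pref \<Phi>) w w'"
    if "strict (pref (\<Phi> |` N1)) w w'" "pref (\<Phi> |` N2) w w'" for w w'
    using \<open>property4 pref\<close> \<open>is_profile \<Phi>\<close> part' that unfolding property4_def by blast
  show "strict (pref \<Phi>) w w'"
    if "pref (\<Phi> |` N1) w w'" "strict (pref (\<Phi> |` N2)) w w'" for w w'
    using \<open>property4 pref\<close> \<open>is_profile \<Phi>\<close> part that unfolding property4_def by blast
qed (fact assms)

lemma conj_models_singleton: "conj_models B [i \<mapsto> e] = models (B e)"
  unfolding conj_models_def by simp

lemma conj_models_restrict_Un:
  assumes "N1 \<union> N2 = dom \<Phi>"
  shows "conj_models B \<Phi> = conj_models B (\<Phi> |` N1) \<inter> conj_models B (\<Phi> |` N2)"
  using assms unfolding conj_models_def by auto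

lemma maxset_restrict_singleton:
  assumes "maximality_condition B pref" and "i \<in> dom \<Phi>"
  shows "maxset (pref (\<Phi> |` {i})) = conj_models B (\<Phi> |` {i})"
proof -
  obtain e where "\<Phi> i = Some e" using \<open>i \<in> dom \<Phi>\<close> by blast
  then have "\<Phi> |` {i} = [i \<mapsto> e]"
    by (simp add: restrict_map_insert)
  then show ?thesis
    using assms(1) by (simp add: conj_models_singleton maximality_condition_def)
qed

lemma property2_if_maximality_condition:
  fixes B :: "'e \<Rightarrow> 'v form"
    and pref :: "(('a::wellorder) \<rightharpoonup> 'e) \<Rightarrow> ('v \<Rightarrow> bool) \<Rightarrow> ('v \<Rightarrow> bool) \<Rightarrow> bool"
  assumes "assignment pref" "property3 pref" "property4 pref"
    and max: "maximality_condition B pref"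
  shows "property2 B pref"
proof -
  have "conj_models B \<Phi> = maxset (pref \<Phi>)"
    if "finite N" "N \<noteq> {}" "dom \<Phi> = N" "conj_models B \<Phi> \<noteq> {}" for N and \<Phi> :: "'a \<rightharpoonup> 'e"
    using that
  proof (induction N arbitrary: \<Phi> rule: finite_ne_induct)
    case (singleton i)
    then have "\<Phi> |` {i} = \<Phi>"
      by (auto simp: restrict_map_def fun_eq_iff domIff)
    moreover have "i \<in> dom \<Phi>" using singleton.prems(1) by simp
    ultimately show ?case using maxset_restrict_singleton[OF max, of i \<Phi>] by simp
  next
    case (insert i N)
    have part: "is_partition (dom \<Phi>) {i} N"
      using insert.hyps insert.prems(1) unfolding is_partition_def by auto
    have cm: "conj_models B \<Phi> = conj_models B (\<Phi> |` {i}) \<inter> conj_models B (\<Phi> |` N)"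
      using insert.prems(1) by (intro conj_models_restrict_Un) auto
    have max_i: "maxset (pref (\<Phi> |` {i})) = conj_models B (\<Phi> |` {i})"
      using maxset_restrict_singleton[OF max, of i \<Phi>] insert.prems(1) by simp
    have "dom (\<Phi> |` N) = N" using insert.prems(1) by auto
    moreover have "conj_models B (\<Phi> |` N) \<noteq> {}" using insert.prems(2) cm by blast
    ultimately have max_N: "maxset (pref (\<Phi> |` N)) = conj_models B (\<Phi> |` N)"
      using insert.IH by simp
    have "is_profile \<Phi>"
      using insert.hyps(1) insert.prems(1) unfolding is_profile_def by simp
    from maxset_partition[OF assms(1-3) this part] show ?case
      using insert.prems(2) cm max_i max_N by simp
  qed
  then show ?thesis
    unfolding property2_def is_profile_def by blast
qed

lemma maximality_condition_if_property2:
  fixes B :: "'e \<Rightarrow> ('v::finite) form"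
    and pref :: "(('a::wellorder) \<rightharpoonup> 'e) \<Rightarrow> ('v \<Rightarrow> bool) \<Rightarrow> ('v \<Rightarrow> bool) \<Rightarrow> bool"
  assumes "epistemic_space B" and "property2 B pref"
  shows "maximality_condition B pref"
  unfolding maximality_condition_def
proof (intro allI)
  fix i :: 'a and e :: 'e
  have "is_profile [i \<mapsto> e]" unfolding is_profile_def by simp
  moreover have "models (B e) \<noteq> {}"
    using \<open>epistemic_space B\<close> unfolding epistemic_space_def consistent_def by blast
  ultimately show "models (B e) = maxset (pref [i \<mapsto> e])"
    using \<open>property2 B pref\<close> unfolding property2_def by (metis conj_models_singleton)
qed

theorem mainTheorem6:
  fixes B :: "'e \<Rightarrow> ('v::finite) form"
    and pref :: "(('a::wellorder) \<rightharpoonup> 'e) \<Rightarrow> ('v \<Rightarrow> bool) \<Rightarrow> ('v \<Rightarrow> bool) \<Rightarrow> bool"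
  assumes "epistemic_space B"
    and "assignment pref"
    and "property3 pref"
    and "property4 pref"
  shows "property2 B pref \<longleftrightarrow> maximality_condition B pref"
  using assms maximality_condition_if_property2 property2_if_maximality_condition by blast

end
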